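(* Let $T$ be a non-special Aronszajn tree and $\mathbb{P}$ an $\aleph_1$-$\sigma$-linked poset. Then $\mathbb{P}$ forces that $T$ is not special.
   Context: An Aronszajn tree (height $\omega_1$, countable levels and chains) is special if it is a union of countably many antichains. A poset $\mathbb{P}$ is $\aleph_1$-$\sigma$-linked if for every sequence $\langle p_\alpha:\alpha<\omega_1\rangle$ of conditions, $\{p_\alpha:\alpha<\omega_1\}$ is covered by countably many linked (pairwise compatible) subsets of $\mathbb{P}$. *)

theory Defs
  imports Main "HOL-Library.Countable_Set"
begin

definition pred_set :: "'a set \<Rightarrow> ('a \<Rightarrow> 'a \<Rightarrow> bool) \<Rightarrow> 'a \<Rightarrow> 'a set" where
  "pred_set T lt t = {s \<in> T. lt s t}"

text \<open>The (reflexive) well-order on the predecessors of t; its order type is the height of t.\<close>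
definition pred_rel :: "'a set \<Rightarrow> ('a \<Rightarrow> 'a \<Rightarrow> bool) \<Rightarrow> 'a \<Rightarrow> 'a rel" where
  "pred_rel T lt t = {(x, y). x \<in> pred_set T lt t \<and> y \<in> pred_set T lt t \<and> (lt x y \<or> x = y)}"

definition is_tree :: "'a set \<Rightarrow> ('a \<Rightarrow> 'a \<Rightarrow> bool) \<Rightarrow> bool" where
  "is_tree T lt \<longleftrightarrow>
     (\<forall>x\<in>T. \<not> lt x x) \<and>
     (\<forall>x\<in>T. \<forall>y\<in>T. \<forall>z\<in>T. lt x y \<longrightarrow> lt y z \<longrightarrow> lt x z) \<and>
     (\<forall>t\<in>T. Well_order (pred_rel T lt t))"

definition tree_level :: "'a set \<Rightarrow> ('a \<Rightarrow> 'a \<Rightarrow> bool) \<Rightarrow> 'a \<Rightarrow> 'a set" where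
  "tree_level T lt t = {u \<in> T. (pred_rel T lt u, pred_rel T lt t) \<in> ordIso}"

definition is_chain :: "'a set \<Rightarrow> ('a \<Rightarrow> 'a \<Rightarrow> bool) \<Rightarrow> 'a set \<Rightarrow> bool" where
  "is_chain T lt C \<longleftrightarrow> C \<subseteq> T \<and> (\<forall>x\<in>C. \<forall>y\<in>C. x = y \<or> lt x y \<or> lt y x)"

definition is_antichain :: "'a set \<Rightarrow> ('a \<Rightarrow> 'a \<Rightarrow> bool) \<Rightarrow> 'a set \<Rightarrow> bool" where
  "is_antichain T lt A \<longleftrightarrow> A \<subseteq> T \<and> (\<forall>x\<in>A. \<forall>y\<in>A. \<not> lt x y)"

text \<open>Aronszajn tree: height omega_1 (every node has countably many predecessors,
  and T is uncountable with countable levels, so all levels below omega_1 are nonempty),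
  countable levels, countable chains.\<close>
definition aronszajn :: "'a set \<Rightarrow> ('a \<Rightarrow> 'a \<Rightarrow> bool) \<Rightarrow> bool" where
  "aronszajn T lt \<longleftrightarrow>
     is_tree T lt \<and>
     \<not> countable T \<and>
     (\<forall>t\<in>T. countable (pred_set T lt t)) \<and>
     (\<forall>t\<in>T. countable (tree_level T lt t)) \<and>
     (\<forall>C. is_chain T lt C \<longrightarrow> countable C)"

definition special :: "'a set \<Rightarrow> ('a \<Rightarrow> 'a \<Rightarrow> bool) \<Rightarrow> bool" where
  "special T lt \<longleftrightarrow> (\<exists>A :: nat \<Rightarrow> 'a set. (\<forall>n. is_antichain T lt (A n)) \<and> T = (\<Union>n. A n))"

text \<open>Forcing convention: le q p means q is stronger than (extends) p.\<close>
definition is_poset :: "'p set \<Rightarrow> ('p \<Rightarrow> 'p \<Rightarrow> bool) \<Rightarrow> bool" where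
  "is_poset P le \<longleftrightarrow>
     (\<forall>p\<in>P. le p p) \<and>
     (\<forall>p\<in>P. \<forall>q\<in>P. \<forall>r\<in>P. le p q \<longrightarrow> le q r \<longrightarrow> le p r) \<and>
     (\<forall>p\<in>P. \<forall>q\<in>P. le p q \<longrightarrow> le q p \<longrightarrow> p = q)"

definition compatible :: "'p set \<Rightarrow> ('p \<Rightarrow> 'p \<Rightarrow> bool) \<Rightarrow> 'p \<Rightarrow> 'p \<Rightarrow> bool" where
  "compatible P le p q \<longleftrightarrow> (\<exists>r\<in>P. le r p \<and> le r q)"

definition linked :: "'p set \<Rightarrow> ('p \<Rightarrow> 'p \<Rightarrow> bool) \<Rightarrow> 'p set \<Rightarrow> bool" where
  "linked P le L \<longleftrightarrow> L \<subseteq> P \<and> (\<forall>p\<in>L. \<forall>q\<in>L. compatible P le p q)"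

text \<open>aleph_1-sigma-linked: the range of every omega_1-sequence of conditions, i.e. every
  set of conditions of cardinality at most aleph_1, is covered by countably many linked sets.\<close>
definition aleph1_sigma_linked :: "'p set \<Rightarrow> ('p \<Rightarrow> 'p \<Rightarrow> bool) \<Rightarrow> bool" where
  "aleph1_sigma_linked P le \<longleftrightarrow>
     (\<forall>X \<subseteq> P. (card_of X, cardSuc (card_of (UNIV :: nat set))) \<in> ordLeq \<longrightarrow>
        (\<exists>L :: nat \<Rightarrow> 'p set. (\<forall>n. linked P le (L n)) \<and> X \<subseteq> (\<Union>n. L n)))"

text \<open>The condition p forces "T is special" iff there is a P-name for a function
  f : T \<rightarrow> omega that p forces to be injective on chains. Such a name is coded by
  F t n = the set of conditions below p forcing f(t) = n: for each t these sets are
  predense below p, and conditions forcing f(s) = n and f(t) = n for s <_T t are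
  incompatible.\<close>
definition forces_special ::
  "'p set \<Rightarrow> ('p \<Rightarrow> 'p \<Rightarrow> bool) \<Rightarrow> 'a set \<Rightarrow> ('a \<Rightarrow> 'a \<Rightarrow> bool) \<Rightarrow> 'p \<Rightarrow> bool" where
  "forces_special P le T lt p \<longleftrightarrow>
     (\<exists>F :: 'a \<Rightarrow> nat \<Rightarrow> 'p set.
        (\<forall>t\<in>T. \<forall>n. F t n \<subseteq> {q \<in> P. le q p}) \<and>
        (\<forall>t\<in>T. \<forall>r\<in>P. le r p \<longrightarrow> (\<exists>n. \<exists>q\<in>F t n. compatible P le r q)) \<and>
        (\<forall>s\<in>T. \<forall>t\<in>T. lt s t \<longrightarrow>
            (\<forall>n. \<forall>q\<in>F s n. \<forall>r\<in>F t n. \<not> compatible P le q r)))"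

definition forces_not_special ::
  "'p set \<Rightarrow> ('p \<Rightarrow> 'p \<Rightarrow> bool) \<Rightarrow> 'a set \<Rightarrow> ('a \<Rightarrow> 'a \<Rightarrow> bool) \<Rightarrow> bool" where
  "forces_not_special P le T lt \<longleftrightarrow> (\<forall>p\<in>P. \<not> forces_special P le T lt p)"

end

theory Submission
  imports Defs "HOL-Library.Countable_Set_Type"
begin

text \<open>Suppose a condition p forces a specialising function f : T \<rightarrow> \<omega>. For every node t pick
  a condition q(t) \<le> p and a number n(t) with q(t) \<Vdash> f(t) = n(t). An Aronszajn tree has
  \<aleph>1 nodes, so the conditions q(t) are covered by countably many linked sets L(m). Colour t
  by the pair (m, n(t)) with q(t) \<in> L(m): if s < t had the same colour, then q(s) and q(t) would
  be compatible conditions forcing f(s) = f(t). So this colouring specialises T already in the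
  ground model.\<close>

unbundle cardinal_syntax

abbreviation aleph1 :: "nat set rel" where
  "aleph1 \<equiv> cardSuc |UNIV :: nat set|"

lemma Card_order_aleph1: "Card_order aleph1"
  by (simp add: cardSuc_Card_order card_of_Card_order)

lemma infinite_Field_aleph1: "infinite (Field aleph1)"
  using cardSuc_finite[OF card_of_Card_order, of "UNIV :: nat set"] by (simp add: Field_card_of)

lemma countable_ordLess_aleph1: "countable A \<Longrightarrow> |A| <o aleph1"
  using countable_card_of_nat cardSuc_greater[OF card_of_Card_order] ordLeq_ordLess_trans
  by blast

lemma ordLess_Card_order_if_card_of_Field_ordLess:
  assumes "Well_order r" and "Card_order k" and "|Field r| <o k"
  shows "r <o k"
proof (rule ccontr)
  assume "\<not> r <o k"
  then have "k \<le>o r"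
    using assms(1,2) ordLess_or_ordLeq card_order_on_well_order_on by blast
  then have "|Field k| \<le>o |Field r|" by (rule card_of_mono2)
  then have "k \<le>o |Field r|"
    using card_of_Field_ordIso[OF assms(2)] ordIso_ordLeq_trans ordIso_symmetric by blast
  then show False using assms(3) not_ordLess_ordLeq by blast
qed

lemma card_of_ordLeq_aleph1_if_countable_fibres:
  assumes "h ` A \<subseteq> Field aleph1" and "\<And>a. countable {x \<in> A. h x = a}"
  shows "|A| \<le>o aleph1"
proof -
  have "|h ` A| \<le>o aleph1"
    using card_of_mono1[OF assms(1)] card_of_Field_ordIso[OF Card_order_aleph1]
    by (rule ordLeq_ordIso_trans)
  moreover have "\<forall>a \<in> h ` A. |{x \<in> A. h x = a}| \<le>o aleph1"
    using assms(2) by (intro ballI ordLess_imp_ordLeq countable_ordLess_aleph1)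
  ultimately have "|\<Union>a \<in> h ` A. {x \<in> A. h x = a}| \<le>o aleph1"
    by (rule card_of_UNION_ordLeq_infinite_Field[OF infinite_Field_aleph1 Card_order_aleph1])
  moreover have "(\<Union>a \<in> h ` A. {x \<in> A. h x = a}) = A" by blast
  ultimately show ?thesis by simp
qed

lemma Field_pred_rel: "Field (pred_rel T lt t) = pred_set T lt t"
  unfolding pred_rel_def Field_def by auto

lemma Well_order_pred_rel: "is_tree T lt \<Longrightarrow> t \<in> T \<Longrightarrow> Well_order (pred_rel T lt t)"
  unfolding is_tree_def by blast

lemma pred_rel_ordLess_aleph1:
  assumes "is_tree T lt" and "t \<in> T" and "countable (pred_set T lt t)"
  shows "pred_rel T lt t <o aleph1"
proof (rule ordLess_Card_order_if_card_of_Field_ordLess)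
  show "Well_order (pred_rel T lt t)" using assms(1,2) by (rule Well_order_pred_rel)
  show "|Field (pred_rel T lt t)| <o aleph1"
    unfolding Field_pred_rel using countable_ordLess_aleph1[OF assms(3)] .
qed (rule Card_order_aleph1)

lemma pred_rel_ordIso_initial_segment_aleph1:
  assumes "is_tree T lt" and "t \<in> T" and "countable (pred_set T lt t)"
  shows "\<exists>a. a \<in> Field aleph1 \<and> pred_rel T lt t =o Restr aleph1 (underS aleph1 a)"
  using ordLess_iff_ordIso_Restr[OF cardSuc_Well_order[OF card_of_Card_order[of "UNIV :: nat set"]]
      Well_order_pred_rel[OF assms(1,2)]]
    pred_rel_ordLess_aleph1[OF assms]
  by (simp add: Bex_def)

text \<open>The height of a node is the point of \<aleph>1 whose initial segment is isomorphic to the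
  order of its predecessors; nodes of equal height lie on one level.\<close>

lemma tree_card_of_ordLeq_aleph1:
  assumes tree: "is_tree T lt"
    and countable_preds: "\<forall>t\<in>T. countable (pred_set T lt t)"
    and countable_levels: "\<forall>t\<in>T. countable (tree_level T lt t)"
  shows "|T| \<le>o aleph1"
proof -
  have "\<forall>t\<in>T. \<exists>a. a \<in> Field aleph1 \<and> pred_rel T lt t =o Restr aleph1 (underS aleph1 a)"
    by (intro ballI pred_rel_ordIso_initial_segment_aleph1[OF tree] countable_preds[rule_format])
  then have "\<exists>height. \<forall>t\<in>T. height t \<in> Field aleph1 \<and>
      pred_rel T lt t =o Restr aleph1 (underS aleph1 (height t))"
    by (rule bchoice)
  then obtain height where height: "\<forall>t\<in>T. height t \<in> Field aleph1 \<and>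
      pred_rel T lt t =o Restr aleph1 (underS aleph1 (height t))" ..
  show ?thesis
  proof (rule card_of_ordLeq_aleph1_if_countable_fibres)
    show "height ` T \<subseteq> Field aleph1" using height by blast
  next
    fix a
    show "countable {t \<in> T. height t = a}"
    proof (cases "a \<in> height ` T")
      case True
      then obtain t where t: "t \<in> T" "height t = a" by blast
      have "{u \<in> T. height u = a} \<subseteq> tree_level T lt t"
      proof (intro subsetI)
        fix u assume u: "u \<in> {u \<in> T. height u = a}"
        have "pred_rel T lt u =o Restr aleph1 (underS aleph1 a)" using height u by auto
        moreover have "pred_rel T lt t =o Restr aleph1 (underS aleph1 a)" using height t by auto
        ultimately have "pred_rel T lt u =o pred_rel T lt t"
          by (rule ordIso_transitive[OF _ ordIso_symmetric])
        then show "u \<in> tree_level T lt t" using u unfolding tree_level_def by blast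
      qed
      then show ?thesis using countable_levels t countable_subset by blast
    next
      case False
      then have "{t \<in> T. height t = a} = {}" by auto
      then show ?thesis by (metis countable_empty)
    qed
  qed
qed

lemma special_if_colouring:
  fixes colour :: "'a \<Rightarrow> 'b :: countable"
  assumes "\<And>s t. s \<in> T \<Longrightarrow> t \<in> T \<Longrightarrow> lt s t \<Longrightarrow> colour s \<noteq> colour t"
  shows "special T lt"
  unfolding special_def
proof (intro exI conjI allI)
  fix n
  show "is_antichain T lt {t \<in> T. to_nat (colour t) = n}"
    unfolding is_antichain_def by (auto dest: assms)
qed auto

lemma special_if_forces_special:
  fixes T :: "'a set" and P :: "'p set"
  assumes "aleph1_sigma_linked P le" and "|T| \<le>o aleph1"
    and "p \<in> P" and "le p p" and "forces_special P le T lt p"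
  shows "special T lt"
proof -
  obtain F :: "'a \<Rightarrow> nat \<Rightarrow> 'p set" where
    below_p: "\<forall>t\<in>T. \<forall>n. F t n \<subseteq> {q \<in> P. le q p}" and
    predense: "\<forall>t\<in>T. \<forall>r\<in>P. le r p \<longrightarrow> (\<exists>n. \<exists>q\<in>F t n. compatible P le r q)" and
    incompatible: "\<forall>s\<in>T. \<forall>t\<in>T. lt s t \<longrightarrow> (\<forall>n. \<forall>q\<in>F s n. \<forall>r\<in>F t n. \<not> compatible P le q r)"
    using assms(5) unfolding forces_special_def by blast
  have "\<forall>t\<in>T. \<exists>n. F t n \<noteq> {}" using predense assms(3,4) by blast
  then have "\<exists>n. \<forall>t\<in>T. F t (n t) \<noteq> {}" by (rule bchoice)
  then obtain n where n: "\<forall>t\<in>T. F t (n t) \<noteq> {}" ..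
  define q where "q t = (SOME q. q \<in> F t (n t))" for t
  have q: "q t \<in> F t (n t)" if "t \<in> T" for t
    unfolding q_def using n that by (simp add: some_in_eq)
  have q_in_P: "q ` T \<subseteq> P" using q below_p by blast
  have q_card: "|q ` T| \<le>o aleph1"
    using card_of_image assms(2) by (rule ordLeq_transitive)
  obtain L :: "nat \<Rightarrow> 'p set" where
    linked: "\<And>m. linked P le (L m)" and cover: "q ` T \<subseteq> (\<Union>m. L m)"
    using assms(1)[unfolded aleph1_sigma_linked_def, rule_format, OF q_in_P q_card] by blast
  have "\<forall>t\<in>T. \<exists>m. q t \<in> L m" using cover by blast
  then have "\<exists>m. \<forall>t\<in>T. q t \<in> L (m t)" by (rule bchoice)
  then obtain m where m: "\<forall>t\<in>T. q t \<in> L (m t)" ..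
  show ?thesis
  proof (rule special_if_colouring[where colour = "\<lambda>t. (m t, n t)"])
    fix s t assume s: "s \<in> T" and t: "t \<in> T" and "lt s t"
    show "(m s, n s) \<noteq> (m t, n t)"
    proof
      assume same: "(m s, n s) = (m t, n t)"
      then have "q s \<in> L (m t)" and "q t \<in> L (m t)" using m s t by auto
      then have "compatible P le (q s) (q t)" using linked[of "m t"] unfolding linked_def by blast
      moreover have "q s \<in> F s (n t)" using q[OF s] same by simp
      ultimately show False using incompatible q[OF t] s t \<open>lt s t\<close> by blast
    qed
  qed
qed

theorem lemma4:
  fixes T :: "'a set" and lt :: "'a \<Rightarrow> 'a \<Rightarrow> bool"
    and P :: "'p set" and le :: "'p \<Rightarrow> 'p \<Rightarrow> bool"
  assumes "aronszajn T lt" and "\<not> special T lt"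
    and "is_poset P le" and "aleph1_sigma_linked P le"
  shows "forces_not_special P le T lt"
proof -
  have "is_tree T lt" and "\<forall>t\<in>T. countable (pred_set T lt t)"
    and "\<forall>t\<in>T. countable (tree_level T lt t)"
    using assms(1) unfolding aronszajn_def by blast+
  then have "|T| \<le>o aleph1" by (rule tree_card_of_ordLeq_aleph1)
  have "special T lt" if "p \<in> P" and "forces_special P le T lt p" for p
  proof (rule special_if_forces_special[OF assms(4) \<open>|T| \<le>o aleph1\<close> that(1) _ that(2)])
    show "le p p" using assms(3) that(1) unfolding is_poset_def by blast
  qed
  then show ?thesis using assms(2) unfolding forces_not_special_def by blast
qed

end
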